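(* There is a universal constant $c>0$ such that for infinitely many $k$ there exist collaborative learning problems with $k$ agents, strategy space $\mathbb{R}_+^k$ and well-behaved utility functions whose Price of Stability and Price of Fairness are both at least $c\sqrt{k}$. Moreover, such problems exist in each of the following two settings: (a) a random coverage setting in which every agent's distribution is uniform over a subset of the domain, all subsets having the same size; (b) a linear utility setting ${\bf u}({\boldsymbol\theta})=W{\boldsymbol\theta}$ with $W_{ii}=1$ and $W_{ij}=O(1/\sqrt{k})$ for $j\ne i$.
   Context: A collaborative learning problem has $k$ agents, strategy space $\Theta\subseteq\mathbb{R}_+^k$, non-decreasing utilities $u_i$ and thresholds $\mu_i$, each agent able to meet her threshold alone with some $\vartheta_i$ (i.e. $u_i(\vartheta_i,\mathbf{0}_{-i})\ge\mu_i$, where $(x,{\boldsymbol\theta}_{-i})$ replaces the $i$-th entry by $x$). ${\boldsymbol\theta}$ is feasible if $u_i({\boldsymbol\theta})\ge\mu_i$ for all $i$. A socially optimal solution minimizes $\mathbf{1}^\top{\boldsymbol\theta}$ over feasible ${\boldsymbol\theta}\in\Theta$. A feasible ${\boldsymbol\theta}$ is a stable equilibrium if no $i$ has $\theta_i'<\theta_i$ with $(\theta_i',{\boldsymbol\theta}_{-i})\in\Theta$, $u_i(\theta_i',{\boldsymbol\theta}_{-i})\ge\mu_i$; it is envy-free if no $i,j$ have $\theta_j<\theta_i$, ${\boldsymbol\theta}^{(i,j)}\in\Theta$ and $u_i({\boldsymbol\theta}^{(i,j)})\ge\mu_i$, where ${\boldsymbol\theta}^{(i,j)}$ swaps entries $i,j$.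 Price of Stability $=\min_{{\boldsymbol\theta}\text{ stable eq.}}\mathbf{1}^\top{\boldsymbol\theta}/\mathbf{1}^\top{\boldsymbol\theta}^{\mathrm{opt}}$; Price of Fairness $=\min_{{\boldsymbol\theta}\text{ envy-free}}\mathbf{1}^\top{\boldsymbol\theta}/\mathbf{1}^\top{\boldsymbol\theta}^{\mathrm{opt}}$, with ${\boldsymbol\theta}^{\mathrm{opt}}$ socially optimal. Utilities are well-behaved over a box $\prod_i[0,C_i]\subseteq\Theta$ (here the box $\prod_i[0,\vartheta_i]$) if for each $i$ there are $c_1^i\ge0,c_2^i>0$ with $\partial u_i/\partial\theta_i\ge c_2^i$ and $0\le\partial u_i/\partial\theta_j\le c_1^i$ ($j\ne i$) on the box (one-sided derivatives where needed). Random coverage: finite domain $\mathcal{X}$, agent $i$ has distribution $(q_{ix})_{x\in\mathcal{X}}$; for integers $m_j$, $U_i({\bf m})=1-\frac12\sum_{x}q_{ix}\prod_{j}(1-q_{jx})^{m_j}$; for real ${\boldsymbol\theta}$, $u_i({\boldsymbol\theta})=\mathbb{E}[U_i({\bf m})]$ where the $m_j$ are independent and $m_j=\lfloor\theta_j\rfloor+\mathrm{Bernoulli}(\theta_j-\lfloor\theta_j\rfloor)$. Linear setting: $u_i({\boldsymbol\theta})=\sum_jW_{ij}\theta_j$ with $W\in[0,1]^{k\times k}$. *)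

theory Defs
  imports "HOL-Analysis.Analysis" "HOL-Probability.Probability"
begin

text \<open>Agents are indexed by 0..k-1. A strategy profile is a function nat => real;
  members of the strategy spaces below vanish outside {..<k}.\<close>

definition nonneg_orthant :: "nat \<Rightarrow> (nat \<Rightarrow> real) set" where
  "nonneg_orthant k = {\<theta>. (\<forall>i<k. 0 \<le> \<theta> i) \<and> (\<forall>i. k \<le> i \<longrightarrow> \<theta> i = 0)}"

definition cost :: "nat \<Rightarrow> (nat \<Rightarrow> real) \<Rightarrow> real" where
  "cost k \<theta> = (\<Sum>i<k. \<theta> i)"

definition alone :: "nat \<Rightarrow> real \<Rightarrow> (nat \<Rightarrow> real)" where
  "alone i x = (\<lambda>j. if j = i then x else 0)"

definition collab_problem ::
  "nat \<Rightarrow> (nat \<Rightarrow> real) set \<Rightarrow> (nat \<Rightarrow> (nat \<Rightarrow> real) \<Rightarrow> real) \<Rightarrow> (nat \<Rightarrow> real)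
    \<Rightarrow> (nat \<Rightarrow> real) \<Rightarrow> bool" where
  "collab_problem k \<Theta> u \<mu> vt \<longleftrightarrow>
     \<Theta> \<subseteq> nonneg_orthant k \<and>
     (\<forall>i<k. \<forall>\<theta>\<in>\<Theta>. \<forall>\<theta>'\<in>\<Theta>. (\<forall>j<k. \<theta> j \<le> \<theta>' j) \<longrightarrow> u i \<theta> \<le> u i \<theta>') \<and>
     (\<forall>i<k. 0 \<le> vt i \<and> alone i (vt i) \<in> \<Theta> \<and> \<mu> i \<le> u i (alone i (vt i)))"

definition feasible where
  "feasible k \<Theta> u \<mu> \<theta> \<longleftrightarrow> \<theta> \<in> \<Theta> \<and> (\<forall>i<k. \<mu> i \<le> u i \<theta>)"

definition socially_optimal where
  "socially_optimal k \<Theta> u \<mu> \<theta> \<longleftrightarrow> feasible k \<Theta> u \<mu> \<theta> \<and>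
     (\<forall>\<theta>'. feasible k \<Theta> u \<mu> \<theta>' \<longrightarrow> cost k \<theta> \<le> cost k \<theta>')"

definition stable_eq where
  "stable_eq k \<Theta> u \<mu> \<theta> \<longleftrightarrow> feasible k \<Theta> u \<mu> \<theta> \<and>
     \<not> (\<exists>i<k. \<exists>x. x < \<theta> i \<and> \<theta>(i := x) \<in> \<Theta> \<and> \<mu> i \<le> u i (\<theta>(i := x)))"

definition swap_entries :: "(nat \<Rightarrow> real) \<Rightarrow> nat \<Rightarrow> nat \<Rightarrow> (nat \<Rightarrow> real)" where
  "swap_entries \<theta> i j = \<theta>(i := \<theta> j, j := \<theta> i)"

definition envy_free where
  "envy_free k \<Theta> u \<mu> \<theta> \<longleftrightarrow> feasible k \<Theta> u \<mu> \<theta> \<and>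
     \<not> (\<exists>i<k. \<exists>j<k. \<theta> j < \<theta> i \<and> swap_entries \<theta> i j \<in> \<Theta> \<and>
            \<mu> i \<le> u i (swap_entries \<theta> i j))"

definition opt_cost where
  "opt_cost k \<Theta> u \<mu> = Inf (cost k ` {\<theta>. feasible k \<Theta> u \<mu> \<theta>})"

definition price_of_stability where
  "price_of_stability k \<Theta> u \<mu> =
     Inf (cost k ` {\<theta>. stable_eq k \<Theta> u \<mu> \<theta>}) / opt_cost k \<Theta> u \<mu>"

definition price_of_fairness where
  "price_of_fairness k \<Theta> u \<mu> =
     Inf (cost k ` {\<theta>. envy_free k \<Theta> u \<mu> \<theta>}) / opt_cost k \<Theta> u \<mu>"

definition box :: "nat \<Rightarrow> (nat \<Rightarrow> real) \<Rightarrow> (nat \<Rightarrow> real) set" where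
  "box k C = {\<theta>. (\<forall>i<k. 0 \<le> \<theta> i \<and> \<theta> i \<le> C i) \<and> (\<forall>i. k \<le> i \<longrightarrow> \<theta> i = 0)}"

definition well_behaved ::
  "nat \<Rightarrow> (nat \<Rightarrow> (nat \<Rightarrow> real) \<Rightarrow> real) \<Rightarrow> (nat \<Rightarrow> real) \<Rightarrow> bool" where
  "well_behaved k u C \<longleftrightarrow>
     (\<forall>i<k. \<exists>c1 c2. 0 \<le> c1 \<and> 0 < c2 \<and>
        (\<forall>\<theta>\<in>box k C. \<forall>j<k.
           (let ok = (\<lambda>D::real. if j = i then c2 \<le> D else 0 \<le> D \<and> D \<le> c1);
                g = (\<lambda>t. u i (\<theta>(j := t)))
            in (\<theta> j < C j \<longrightarrow> (\<exists>D. (g has_real_derivative D) (at (\<theta> j) within {\<theta> j..}) \<and> ok D)) \<and>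
               (0 < \<theta> j \<longrightarrow> (\<exists>D. (g has_real_derivative D) (at (\<theta> j) within {..\<theta> j}) \<and> ok D)))))"

text \<open>Random coverage. q i x: probability of point x under agent i's distribution.\<close>
definition coverage_U ::
  "nat \<Rightarrow> nat set \<Rightarrow> (nat \<Rightarrow> nat \<Rightarrow> real) \<Rightarrow> nat \<Rightarrow> (nat \<Rightarrow> nat) \<Rightarrow> real" where
  "coverage_U k X q i m = 1 - (1/2) * (\<Sum>x\<in>X. q i x * (\<Prod>j<k. (1 - q j x) ^ m j))"

definition sample_count :: "real \<Rightarrow> nat pmf" where
  "sample_count t = map_pmf (\<lambda>b. nat \<lfloor>t\<rfloor> + (if b then 1 else 0)) (bernoulli_pmf (t - of_int \<lfloor>t\<rfloor>))"

definition coverage_u ::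
  "nat \<Rightarrow> nat set \<Rightarrow> (nat \<Rightarrow> nat \<Rightarrow> real) \<Rightarrow> nat \<Rightarrow> (nat \<Rightarrow> real) \<Rightarrow> real" where
  "coverage_u k X q i \<theta> =
     measure_pmf.expectation (Pi_pmf {..<k} 0 (\<lambda>j. sample_count (\<theta> j))) (coverage_U k X q i)"

definition uniform_q :: "(nat \<Rightarrow> nat set) \<Rightarrow> nat \<Rightarrow> nat \<Rightarrow> real" where
  "uniform_q S i x = pmf (pmf_of_set (S i)) x"

definition linear_u :: "nat \<Rightarrow> (nat \<Rightarrow> nat \<Rightarrow> real) \<Rightarrow> nat \<Rightarrow> (nat \<Rightarrow> real) \<Rightarrow> real" where
  "linear_u k W i \<theta> = (\<Sum>j<k. W i j * \<theta> j)"

text \<open>"PoS and PoF are both at least r": stable equilibria, envy-free solutions and a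
  socially optimal solution exist, and the two ratios are at least r.\<close>
definition bad_prices where
  "bad_prices k \<Theta> u \<mu> r \<longleftrightarrow>
     (\<exists>\<theta>. socially_optimal k \<Theta> u \<mu> \<theta>) \<and>
     (\<exists>\<theta>. stable_eq k \<Theta> u \<mu> \<theta>) \<and> (\<exists>\<theta>. envy_free k \<Theta> u \<mu> \<theta>) \<and>
     r \<le> price_of_stability k \<Theta> u \<mu> \<and> r \<le> price_of_fairness k \<Theta> u \<mu>"

end

theory Submission
  imports Defs
begin

text \<open>Both instances have k = m^2 + 1 agents: a hub, agent 0, whose threshold holds at every
  profile, and m^2 leaves. A unit of hub effort serves every leaf, though each only with weight
  about 1/m, while leaf effort serves essentially the leaf alone; so it is optimal to let the hub do
  all the work. But in a stable equilibrium the hub, a free rider, contributes nothing, and in an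
  envy-free solution it contributes no more than any leaf, since otherwise it would envy that leaf's
  smaller burden. The leaves then have to serve themselves, which costs m/2 times as much, and
  m/2 >= sqrt k / 4.\<close>

section \<open>Free riders\<close>

lemma nonneg_orthant_nonneg: "\<theta> \<in> nonneg_orthant k \<Longrightarrow> i < k \<Longrightarrow> 0 \<le> \<theta> i"
  unfolding nonneg_orthant_def by auto

lemma alone_in_nonneg_orthant: "i < k \<Longrightarrow> 0 \<le> a \<Longrightarrow> alone i a \<in> nonneg_orthant k"
  unfolding alone_def nonneg_orthant_def by auto

lemma fun_upd_zero_in_nonneg_orthant: "\<theta> \<in> nonneg_orthant k \<Longrightarrow> \<theta>(i := 0) \<in> nonneg_orthant k"
  unfolding nonneg_orthant_def by auto

lemma swap_entries_in_nonneg_orthant: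
  "\<theta> \<in> nonneg_orthant k \<Longrightarrow> i < k \<Longrightarrow> j < k \<Longrightarrow> swap_entries \<theta> i j \<in> nonneg_orthant k"
  unfolding nonneg_orthant_def swap_entries_def by auto

lemma cost_eq_first_plus_rest: "0 < k \<Longrightarrow> cost k \<theta> = \<theta> 0 + (\<Sum>l\<in>{1..<k}. \<theta> l)"
  unfolding cost_def by (simp add: lessThan_atLeast0 sum.atLeast_Suc_lessThan)

definition unit_profile :: "nat \<Rightarrow> nat \<Rightarrow> real" where
  "unit_profile k = (\<lambda>l. if l < k then 1 else 0)"

lemma unit_profile_no_envy:
  "\<not> (\<exists>i<k. \<exists>j<k. unit_profile k j < unit_profile k i \<and> P i j)"
  unfolding unit_profile_def by auto

lemma unit_profile_in_nonneg_orthant: "unit_profile k \<in> nonneg_orthant k"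
  unfolding unit_profile_def nonneg_orthant_def by auto

lemma stable_eq_free_rider_zero:
  assumes st: "stable_eq k (nonneg_orthant k) u \<mu> \<theta>" and h: "h < k"
    and free: "\<And>\<theta>. \<theta> \<in> nonneg_orthant k \<Longrightarrow> \<mu> h \<le> u h \<theta>"
  shows "\<theta> h = 0"
proof (rule ccontr)
  assume "\<theta> h \<noteq> 0"
  have th: "\<theta> \<in> nonneg_orthant k" using st unfolding stable_eq_def feasible_def by simp
  then have "0 < \<theta> h" using \<open>\<theta> h \<noteq> 0\<close> nonneg_orthant_nonneg[OF th h] by simp
  moreover have "\<theta>(h := 0) \<in> nonneg_orthant k" by (rule fun_upd_zero_in_nonneg_orthant[OF th])
  ultimately show False using st h free unfolding stable_eq_def by blast
qed

lemma envy_free_free_rider_least: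
  assumes ef: "envy_free k (nonneg_orthant k) u \<mu> \<theta>" and h: "h < k" and j: "j < k"
    and free: "\<And>\<theta>. \<theta> \<in> nonneg_orthant k \<Longrightarrow> \<mu> h \<le> u h \<theta>"
  shows "\<theta> h \<le> \<theta> j"
proof (rule ccontr)
  assume "\<not> \<theta> h \<le> \<theta> j"
  have th: "\<theta> \<in> nonneg_orthant k" using ef unfolding envy_free_def feasible_def by simp
  have "swap_entries \<theta> h j \<in> nonneg_orthant k" by (rule swap_entries_in_nonneg_orthant[OF th h j])
  then show False using ef h j free \<open>\<not> \<theta> h \<le> \<theta> j\<close> unfolding envy_free_def by force
qed

lemma opt_cost_eq:
  "socially_optimal k \<Theta> u \<mu> \<theta>\<^sub>o \<Longrightarrow> opt_cost k \<Theta> u \<mu> = cost k \<theta>\<^sub>o"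
  unfolding opt_cost_def socially_optimal_def by (intro cInf_eq_minimum) auto

lemma bad_prices_free_rider:
  assumes h: "h < k"
    and free: "\<And>\<theta>. \<theta> \<in> nonneg_orthant k \<Longrightarrow> \<mu> h \<le> u h \<theta>"
    and opt: "socially_optimal k (nonneg_orthant k) u \<mu> \<theta>\<^sub>o" and pos: "0 < cost k \<theta>\<^sub>o"
    and st: "stable_eq k (nonneg_orthant k) u \<mu> \<theta>\<^sub>s"
    and ef: "envy_free k (nonneg_orthant k) u \<mu> \<theta>\<^sub>e"
    and lower: "\<And>\<theta>. feasible k (nonneg_orthant k) u \<mu> \<theta> \<Longrightarrow> \<forall>j<k. \<theta> h \<le> \<theta> j \<Longrightarrow> L \<le> cost k \<theta>"
    and r: "r \<le> L / cost k \<theta>\<^sub>o"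
  shows "bad_prices k (nonneg_orthant k) u \<mu> r"
proof -
  have "L \<le> cost k \<theta>" if "stable_eq k (nonneg_orthant k) u \<mu> \<theta>" for \<theta>
  proof (rule lower)
    show "feasible k (nonneg_orthant k) u \<mu> \<theta>" using that unfolding stable_eq_def by simp
    then have "\<theta> \<in> nonneg_orthant k" unfolding feasible_def by simp
    then show "\<forall>j<k. \<theta> h \<le> \<theta> j"
      using stable_eq_free_rider_zero[OF that h free] nonneg_orthant_nonneg by auto
  qed
  then have "L \<le> Inf (cost k ` {\<theta>. stable_eq k (nonneg_orthant k) u \<mu> \<theta>})"
    using st by (intro cInf_greatest) auto
  then have stability_bound: "L / cost k \<theta>\<^sub>o \<le> price_of_stability k (nonneg_orthant k) u \<mu>"
    unfolding price_of_stability_def opt_cost_eq[OF opt] using pos by (intro divide_right_mono) auto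
  have "L \<le> cost k \<theta>" if "envy_free k (nonneg_orthant k) u \<mu> \<theta>" for \<theta>
    using that envy_free_free_rider_least[OF that h _ free]
    by (intro lower) (auto simp: envy_free_def)
  then have "L \<le> Inf (cost k ` {\<theta>. envy_free k (nonneg_orthant k) u \<mu> \<theta>})"
    using ef by (intro cInf_greatest) auto
  then have fairness_bound: "L / cost k \<theta>\<^sub>o \<le> price_of_fairness k (nonneg_orthant k) u \<mu>"
    unfolding price_of_fairness_def opt_cost_eq[OF opt] using pos by (intro divide_right_mono) auto
  show ?thesis
    unfolding bad_prices_def using opt st ef r stability_bound fairness_bound by auto
qed

section \<open>Well-behaved utilities\<close>

lemma has_real_derivative_at_right:
  "(g has_real_derivative D) (at s within {a..b}) \<Longrightarrow> a \<le> s \<Longrightarrow> s < b \<Longrightarrow>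
     (g has_real_derivative D) (at s within {s..})"
proof -
  assume d: "(g has_real_derivative D) (at s within {a..b})" and "a \<le> s" "s < b"
  then have "at s within {s..} = at s within {s..b}"
    by (intro at_within_nhd[of _ "{..<b}"]) auto
  then show ?thesis using d \<open>a \<le> s\<close> by (auto intro: DERIV_subset)
qed

lemma has_real_derivative_at_left:
  "(g has_real_derivative D) (at s within {a..b}) \<Longrightarrow> a < s \<Longrightarrow> s \<le> b \<Longrightarrow>
     (g has_real_derivative D) (at s within {..s})"
proof -
  assume d: "(g has_real_derivative D) (at s within {a..b})" and "a < s" "s \<le> b"
  then have "at s within {..s} = at s within {a..s}"
    by (intro at_within_nhd[of _ "{a<..}"]) auto
  then show ?thesis using d \<open>s \<le> b\<close> by (auto intro: DERIV_subset)
qed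

lemma well_behavedI:
  assumes c: "\<And>i. i < k \<Longrightarrow> 0 \<le> cross i \<and> 0 < own i"
    and deriv: "\<And>i j \<theta>. i < k \<Longrightarrow> j < k \<Longrightarrow> \<theta> \<in> box k C \<Longrightarrow>
      ((\<lambda>t. u i (\<theta>(j := t))) has_real_derivative D i j \<theta>) (at (\<theta> j) within {0..C j})"
    and bounds: "\<And>i j \<theta>. i < k \<Longrightarrow> j < k \<Longrightarrow> \<theta> \<in> box k C \<Longrightarrow>
      (if j = i then own i \<le> D i j \<theta> else 0 \<le> D i j \<theta> \<and> D i j \<theta> \<le> cross i)"
  shows "well_behaved k u C"
proof -
  have "\<theta> j < C j \<longrightarrow> ((\<lambda>t. u i (\<theta>(j := t))) has_real_derivative D i j \<theta>) (at (\<theta> j) within {\<theta> j..})"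
    "0 < \<theta> j \<longrightarrow> ((\<lambda>t. u i (\<theta>(j := t))) has_real_derivative D i j \<theta>) (at (\<theta> j) within {..\<theta> j})"
    if "i < k" "\<theta> \<in> box k C" "j < k" for i \<theta> j
    using deriv[OF that(1,3,2)] that(2,3)
    by (auto simp: box_def intro: has_real_derivative_at_right has_real_derivative_at_left)
  then have "\<forall>\<theta>\<in>box k C. \<forall>j<k.
      (\<theta> j < C j \<longrightarrow> (\<exists>D'. ((\<lambda>t. u i (\<theta>(j := t))) has_real_derivative D') (at (\<theta> j) within {\<theta> j..}) \<and>
        (if j = i then own i \<le> D' else 0 \<le> D' \<and> D' \<le> cross i))) \<and>
      (0 < \<theta> j \<longrightarrow> (\<exists>D'. ((\<lambda>t. u i (\<theta>(j := t))) has_real_derivative D') (at (\<theta> j) within {..\<theta> j}) \<and>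
        (if j = i then own i \<le> D' else 0 \<le> D' \<and> D' \<le> cross i)))" if "i < k" for i
    using bounds[OF that] that by blast
  with c show ?thesis
    unfolding well_behaved_def Let_def by blast
qed

lemma linear_u_fun_upd:
  "j < k \<Longrightarrow> linear_u k W i (\<theta>(j := t)) = (\<Sum>l\<in>{..<k}-{j}. W i l * \<theta> l) + W i j * t"
  unfolding linear_u_def by (subst sum.remove[of _ j]) (auto intro!: sum.cong)

lemma linear_well_behaved:
  assumes W: "\<forall>i<k. \<forall>j<k. 0 \<le> W i j \<and> W i j \<le> 1" "\<forall>i<k. W i i = 1"
  shows "well_behaved k (linear_u k W) C"
proof (rule well_behavedI[where cross = "\<lambda>_. 1" and own = "\<lambda>_. 1" and D = "\<lambda>i j \<theta>. W i j"])
  show "((\<lambda>t. linear_u k W i (\<theta>(j := t))) has_real_derivative W i j) (at (\<theta> j) within {0..C j})"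
    if "j < k" for i j \<theta>
  proof -
    have "((\<lambda>t. (\<Sum>l\<in>{..<k}-{j}. W i l * \<theta> l) + W i j * t) has_real_derivative W i j)
        (at (\<theta> j) within {0..C j})"
      by (auto intro!: derivative_eq_intros)
    then show ?thesis unfolding linear_u_fun_upd[OF that] .
  qed
  show "if j = i then 1 \<le> W i j else 0 \<le> W i j \<and> W i j \<le> 1" if "i < k" "j < k" for i j
    using W that by simp
qed simp

section \<open>Random coverage\<close>

definition miss_prob :: "real \<Rightarrow> real \<Rightarrow> real" where
  "miss_prob a t = measure_pmf.expectation (sample_count t) (\<lambda>n. (1 - a) ^ n)"

lemma miss_prob_eq: "miss_prob a t = (1 - a) ^ nat \<lfloor>t\<rfloor> * (1 - (t - of_int \<lfloor>t\<rfloor>) * a)"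
proof -
  have "0 \<le> t - of_int \<lfloor>t\<rfloor>" "t - of_int \<lfloor>t\<rfloor> \<le> 1"
    by linarith+
  then show ?thesis unfolding miss_prob_def sample_count_def by (simp add: algebra_simps)
qed

lemma miss_prob_linear: "0 \<le> t \<Longrightarrow> t \<le> 1 \<Longrightarrow> miss_prob a t = 1 - a * t"
  by (cases "t = 1") (auto simp: miss_prob_eq floor_eq_iff)

lemma miss_prob_bounds:
  assumes "0 \<le> a" "a \<le> 1"
  shows "0 \<le> miss_prob a t" "miss_prob a t \<le> 1"
proof -
  have "0 \<le> t - of_int \<lfloor>t\<rfloor>" "t - of_int \<lfloor>t\<rfloor> \<le> 1"
    by linarith+
  then have "0 \<le> (t - of_int \<lfloor>t\<rfloor>) * a" "(t - of_int \<lfloor>t\<rfloor>) * a \<le> 1"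
    using assms by (auto intro: mult_le_one)
  moreover have "0 \<le> (1 - a) ^ nat \<lfloor>t\<rfloor>" "(1 - a) ^ nat \<lfloor>t\<rfloor> \<le> 1"
    using assms by (auto intro: power_le_one)
  ultimately show "0 \<le> miss_prob a t" "miss_prob a t \<le> 1"
    unfolding miss_prob_eq by (auto intro: mult_le_one)
qed

lemma miss_prob_ge_linear:
  assumes a: "0 \<le> a" "a \<le> 1" and t: "0 \<le> t"
  shows "1 - a * t \<le> miss_prob a t"
proof -
  define n where "n = nat \<lfloor>t\<rfloor>"
  define f where "f = t - of_int \<lfloor>t\<rfloor>"
  have t_eq: "t = real n + f" unfolding n_def f_def using t by simp
  have f: "0 \<le> f" "f \<le> 1" unfolding f_def by linarith+
  have bernoulli: "1 - real n * a \<le> (1 - a) ^ n"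
    using Bernoulli_inequality[of "-a" n] a by simp
  have "0 \<le> 1 - f * a" using f a by (smt (verit) mult_le_one)
  with bernoulli have "(1 - real n * a) * (1 - f * a) \<le> miss_prob a t"
    unfolding miss_prob_eq n_def[symmetric] f_def[symmetric] by (rule mult_right_mono)
  moreover have "1 - a * t \<le> (1 - real n * a) * (1 - f * a) \<or> 1 - a * t \<le> 0"
    unfolding t_eq using f a by (cases "0 \<le> 1 - real n * a") (auto simp: algebra_simps)
  ultimately show ?thesis using miss_prob_bounds(1)[OF a, of t] by linarith
qed

lemma miss_prob_antimono:
  assumes a: "0 \<le> a" "a \<le> 1" and st: "0 \<le> s" "s \<le> t"
  shows "miss_prob a t \<le> miss_prob a s"
proof (cases "\<lfloor>s\<rfloor> = \<lfloor>t\<rfloor>")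
  case True
  have "(s - of_int \<lfloor>s\<rfloor>) * a \<le> (t - of_int \<lfloor>t\<rfloor>) * a"
    using True st a by (intro mult_right_mono) auto
  then show ?thesis unfolding miss_prob_eq True using a by (intro mult_left_mono) auto
next
  case False
  then have lt: "nat \<lfloor>s\<rfloor> + 1 \<le> nat \<lfloor>t\<rfloor>" using st floor_mono[OF st(2)] by linarith
  have "0 \<le> t - of_int \<lfloor>t\<rfloor>" "s - of_int \<lfloor>s\<rfloor> \<le> 1"
    by linarith+
  then have "0 \<le> (t - of_int \<lfloor>t\<rfloor>) * a" "(s - of_int \<lfloor>s\<rfloor>) * a \<le> 1 * a"
    using a by (simp, intro mult_right_mono) auto
  then have "miss_prob a t \<le> (1 - a) ^ nat \<lfloor>t\<rfloor>"
    unfolding miss_prob_eq using a by (simp add: mult_left_le)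
  also have "\<dots> \<le> (1 - a) ^ (nat \<lfloor>s\<rfloor> + 1)"
    using a lt by (intro power_decreasing) auto
  also have "\<dots> = (1 - a) ^ nat \<lfloor>s\<rfloor> * (1 - 1 * a)"
    by simp
  also have "\<dots> \<le> miss_prob a s"
    unfolding miss_prob_eq using a \<open>(s - of_int \<lfloor>s\<rfloor>) * a \<le> 1 * a\<close> by (intro mult_left_mono) auto
  finally show ?thesis .
qed

text \<open>The expectation over the sample counts factorises over the agents, so the coverage utility
  has the following closed form.\<close>

definition expected_coverage ::
  "nat \<Rightarrow> nat set \<Rightarrow> (nat \<Rightarrow> nat \<Rightarrow> real) \<Rightarrow> nat \<Rightarrow> (nat \<Rightarrow> real) \<Rightarrow> real" where
  "expected_coverage k X q i \<theta> = 1 - 1/2 * (\<Sum>x\<in>X. q i x * (\<Prod>j<k. miss_prob (q j x) (\<theta> j)))"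

lemma coverage_u_eq_expected_coverage:
  assumes X: "finite X" and q: "\<And>j x. j < k \<Longrightarrow> x \<in> X \<Longrightarrow> q j x \<le> 1"
  shows "coverage_u k X q = expected_coverage k X q"
proof (intro ext)
  fix i \<theta>
  let ?P = "Pi_pmf {..<k} 0 (\<lambda>j. sample_count (\<theta> j))"
  have "finite (set_pmf (sample_count t))" for t
    unfolding sample_count_def by simp
  then have fin: "finite (set_pmf ?P)"
    by (subst set_Pi_pmf) (auto intro!: finite_PiE_dflt)
  have "measure_pmf.expectation ?P (\<lambda>m. \<Prod>j<k. (1 - q j x) ^ m j) = (\<Prod>j<k. miss_prob (q j x) (\<theta> j))"
    if "x \<in> X" for x
    unfolding miss_prob_def using \<open>\<And>t. finite (set_pmf (sample_count t))\<close> q that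
    by (intro expectation_prod_Pi_pmf) (auto intro!: integrable_measure_pmf_finite)
  then show "coverage_u k X q i \<theta> = expected_coverage k X q i \<theta>"
    unfolding coverage_u_def coverage_U_def expected_coverage_def
    by (simp add: integrable_measure_pmf_finite[OF fin] integral_sum)
qed

definition overlap :: "nat set \<Rightarrow> (nat \<Rightarrow> nat \<Rightarrow> real) \<Rightarrow> nat \<Rightarrow> nat \<Rightarrow> real" where
  "overlap X q i j = (\<Sum>x\<in>X. q i x * q j x)"

locale coverage_instance =
  fixes k :: nat and X :: "nat set" and q :: "nat \<Rightarrow> nat \<Rightarrow> real"
  assumes finite_X: "finite X"
    and q_nonneg: "\<And>j x. j < k \<Longrightarrow> x \<in> X \<Longrightarrow> 0 \<le> q j x"
    and q_le_half: "\<And>j x. j < k \<Longrightarrow> x \<in> X \<Longrightarrow> q j x \<le> 1/2"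
      \<comment> \<open>makes every miss factor at least 1/2 on the unit cube, which keeps own slopes positive\<close>
    and q_sum: "\<And>j. j < k \<Longrightarrow> (\<Sum>x\<in>X. q j x) = 1"
begin

lemma q_le_one: "j < k \<Longrightarrow> x \<in> X \<Longrightarrow> q j x \<le> 1"
  using q_le_half by fastforce

lemma miss_prob_q_bounds:
  "j < k \<Longrightarrow> x \<in> X \<Longrightarrow> 0 \<le> miss_prob (q j x) t \<and> miss_prob (q j x) t \<le> 1"
  using miss_prob_bounds q_nonneg q_le_one by blast

lemma miss_prod_bounds:
  "A \<subseteq> {..<k} \<Longrightarrow> x \<in> X \<Longrightarrow>
     0 \<le> (\<Prod>j\<in>A. miss_prob (q j x) (\<theta> j)) \<and> (\<Prod>j\<in>A. miss_prob (q j x) (\<theta> j)) \<le> 1"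
  using miss_prob_q_bounds by (auto intro!: prod_nonneg prod_le_1)

lemma expected_coverage_ge_half: "i < k \<Longrightarrow> 1/2 \<le> expected_coverage k X q i \<theta>"
  using miss_prod_bounds[of "{..<k}"] q_nonneg q_sum
    sum_mono[of X "\<lambda>x. q i x * (\<Prod>j<k. miss_prob (q j x) (\<theta> j))" "q i"]
  unfolding expected_coverage_def by (simp add: mult_left_le)

lemma expected_coverage_mono:
  assumes i: "i < k" and le: "\<And>l. l < k \<Longrightarrow> 0 \<le> \<theta> l \<and> \<theta> l \<le> \<theta>' l"
  shows "expected_coverage k X q i \<theta> \<le> expected_coverage k X q i \<theta>'"
proof -
  have "(\<Sum>x\<in>X. q i x * (\<Prod>j<k. miss_prob (q j x) (\<theta>' j)))
      \<le> (\<Sum>x\<in>X. q i x * (\<Prod>j<k. miss_prob (q j x) (\<theta> j)))"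
    using i le miss_prob_q_bounds q_nonneg q_le_one
    by (intro sum_mono mult_left_mono prod_mono) (auto intro!: miss_prob_antimono)
  then show ?thesis unfolding expected_coverage_def by simp
qed

text \<open>By the union bound on the misses (Weierstrass' product inequality), the utility lies below
  its linearisation at the origin.\<close>

lemma expected_coverage_le_linear:
  assumes i: "i < k" and nonneg: "\<And>l. l < k \<Longrightarrow> 0 \<le> \<theta> l"
  shows "expected_coverage k X q i \<theta> \<le> 1/2 + 1/2 * (\<Sum>j<k. \<theta> j * overlap X q i j)"
proof -
  have "1 - (\<Sum>j<k. q j x * \<theta> j) \<le> (\<Prod>j<k. miss_prob (q j x) (\<theta> j))" if x: "x \<in> X" for x
  proof -
    have "1 - (\<Sum>j<k. q j x * \<theta> j) \<le> 1 - (\<Sum>j<k. 1 - miss_prob (q j x) (\<theta> j))"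
      using x nonneg q_nonneg q_le_one
      by (intro diff_left_mono sum_mono) (smt (verit) miss_prob_ge_linear lessThan_iff)
    also have "\<dots> \<le> (\<Prod>j<k. 1 - (1 - miss_prob (q j x) (\<theta> j)))"
      using x miss_prob_q_bounds by (intro Weierstrass_prod_ineq) auto
    finally show ?thesis by simp
  qed
  then have "(\<Sum>x\<in>X. q i x * (1 - (\<Sum>j<k. q j x * \<theta> j)))
      \<le> (\<Sum>x\<in>X. q i x * (\<Prod>j<k. miss_prob (q j x) (\<theta> j)))"
    using q_nonneg[OF i] by (intro sum_mono mult_left_mono) auto
  moreover have "(\<Sum>x\<in>X. q i x * (1 - (\<Sum>j<k. q j x * \<theta> j))) = 1 - (\<Sum>j<k. \<theta> j * overlap X q i j)"
    unfolding overlap_def using q_sum[OF i]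
    by (simp add: algebra_simps sum_subtractf sum_distrib_left sum_distrib_right sum.swap[of _ X])
  ultimately show ?thesis unfolding expected_coverage_def by simp
qed

text \<open>On [0, 1] the miss probability is affine in the sample count, so the utility is affine in
  each coordinate separately on the unit cube.\<close>

definition miss_others :: "nat \<Rightarrow> (nat \<Rightarrow> real) \<Rightarrow> nat \<Rightarrow> real" where
  "miss_others j \<theta> x = (\<Prod>l\<in>{..<k}-{j}. miss_prob (q l x) (\<theta> l))"

definition coverage_slope :: "nat \<Rightarrow> nat \<Rightarrow> (nat \<Rightarrow> real) \<Rightarrow> real" where
  "coverage_slope i j \<theta> = 1/2 * (\<Sum>x\<in>X. q i x * q j x * miss_others j \<theta> x)"

lemma expected_coverage_affine:
  assumes j: "j < k" and t: "0 \<le> t" "t \<le> 1"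
  shows "expected_coverage k X q i (\<theta>(j := t)) =
    expected_coverage k X q i (\<theta>(j := 0)) + coverage_slope i j \<theta> * t"
proof -
  have prod_upd: "(\<Prod>l<k. miss_prob (q l x) ((\<theta>(j := s)) l)) = (1 - q j x * s) * miss_others j \<theta> x"
    if "0 \<le> s" "s \<le> 1" for x s
  proof -
    have "(\<Prod>l\<in>{..<k}-{j}. miss_prob (q l x) ((\<theta>(j := s)) l)) = miss_others j \<theta> x"
      unfolding miss_others_def by (intro prod.cong) auto
    then show ?thesis using j miss_prob_linear[OF that]
      by (subst prod.remove[of _ j]) auto
  qed
  have "(\<Sum>x\<in>X. q i x * (\<Prod>l<k. miss_prob (q l x) ((\<theta>(j := s)) l))) =
      (\<Sum>x\<in>X. q i x * miss_others j \<theta> x) - s * (\<Sum>x\<in>X. q i x * q j x * miss_others j \<theta> x)"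
    if "0 \<le> s" "s \<le> 1" for s
  proof -
    have "(\<Sum>x\<in>X. q i x * (\<Prod>l<k. miss_prob (q l x) ((\<theta>(j := s)) l))) =
        (\<Sum>x\<in>X. q i x * ((1 - q j x * s) * miss_others j \<theta> x))"
      using prod_upd[OF that] by (intro sum.cong) simp_all
    then show ?thesis by (simp add: algebra_simps sum_subtractf sum_distrib_left)
  qed
  from this[OF t] this[of 0] show ?thesis
    unfolding expected_coverage_def coverage_slope_def by (simp add: algebra_simps)
qed

lemma expected_coverage_alone:
  assumes i: "i < k" and j: "j < k" and a: "0 \<le> a" "a \<le> 1"
  shows "expected_coverage k X q i (alone j a) = 1/2 + 1/2 * overlap X q i j * a"
proof -
  have "alone j a = (\<lambda>_. 0)(j := a)" "(\<lambda>_. 0)(j := 0) = (\<lambda>_. 0 :: real)"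
    unfolding alone_def by auto
  moreover have "miss_others j (\<lambda>_. 0) x = 1" for x
    unfolding miss_others_def by (simp add: miss_prob_linear)
  moreover have "expected_coverage k X q i (\<lambda>_. 0) = 1/2"
    unfolding expected_coverage_def using q_sum[OF i] by (simp add: miss_prob_linear)
  ultimately show ?thesis
    using expected_coverage_affine[OF j a, of i "\<lambda>_. 0"]
    by (simp add: coverage_slope_def overlap_def mult.assoc)
qed

lemma miss_others_bounds: "x \<in> X \<Longrightarrow> 0 \<le> miss_others j \<theta> x \<and> miss_others j \<theta> x \<le> 1"
  unfolding miss_others_def by (rule miss_prod_bounds) auto

lemma miss_others_ge:
  assumes x: "x \<in> X" and cube: "\<And>l. l < k \<Longrightarrow> 0 \<le> \<theta> l \<and> \<theta> l \<le> 1"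
  shows "(1/2) ^ k \<le> miss_others j \<theta> x"
proof -
  have "(1/2::real) ^ k \<le> (1/2) ^ card ({..<k}-{j})"
    by (intro power_decreasing) (auto intro: order.trans[OF card_mono[of "{..<k}"]])
  also have "\<dots> = (\<Prod>l\<in>{..<k}-{j}. 1/2)" by simp
  also have "\<dots> \<le> miss_others j \<theta> x"
    unfolding miss_others_def
  proof (intro prod_mono conjI)
    fix l assume l: "l \<in> {..<k} - {j}"
    have "q l x * \<theta> l \<le> 1/2 * 1" using l x cube by (intro mult_mono q_le_half q_nonneg) auto
    then show "1/2 \<le> miss_prob (q l x) (\<theta> l)" using miss_prob_linear[of "\<theta> l" "q l x"] l cube by auto
  qed auto
  finally show ?thesis .
qed

lemma overlap_self_pos: assumes i: "i < k" shows "0 < overlap X q i i"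
proof -
  obtain x where x: "x \<in> X" "q i x \<noteq> 0"
    using q_sum[OF i] by (metis (mono_tags, lifting) sum.neutral zero_neq_one)
  then have "0 < q i x * q i x" using q_nonneg[OF i] by (simp add: order_less_le)
  then show ?thesis
    unfolding overlap_def using x finite_X by (intro sum_pos2[of X x]) auto
qed

lemma coverage_slope_bounds:
  assumes i: "i < k" and j: "j < k"
  shows "0 \<le> coverage_slope i j \<theta> \<and> coverage_slope i j \<theta> \<le> 1"
proof -
  have "(\<Sum>x\<in>X. q i x * q j x * miss_others j \<theta> x) \<le> (\<Sum>x\<in>X. q i x)"
    using miss_others_bounds q_nonneg q_le_one i j
    by (intro sum_mono) (simp add: mult_le_one mult_left_le mult.assoc)
  moreover have "0 \<le> (\<Sum>x\<in>X. q i x * q j x * miss_others j \<theta> x)"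
    using miss_others_bounds q_nonneg i j by (intro sum_nonneg) simp
  ultimately show ?thesis unfolding coverage_slope_def using q_sum[OF i] by simp
qed

lemma coverage_slope_self_ge:
  assumes cube: "\<And>l. l < k \<Longrightarrow> 0 \<le> \<theta> l \<and> \<theta> l \<le> 1"
  shows "(1/2) ^ k * overlap X q i i / 2 \<le> coverage_slope i i \<theta>"
proof -
  have "(1/2) ^ k * (q i x * q i x) \<le> q i x * q i x * miss_others i \<theta> x" if "x \<in> X" for x
    using mult_right_mono[OF miss_others_ge[of x \<theta> i, OF that cube] zero_le_square[of "q i x"]]
    by (simp add: ac_simps)
  then have "(\<Sum>x\<in>X. (1/2) ^ k * (q i x * q i x)) \<le> (\<Sum>x\<in>X. q i x * q i x * miss_others i \<theta> x)"
    by (rule sum_mono)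
  then show ?thesis
    unfolding coverage_slope_def overlap_def sum_distrib_left[symmetric] by simp
qed

lemma expected_coverage_has_derivative:
  assumes j: "j < k" and b: "b \<le> 1" and s: "s \<in> {0..b}"
  shows "((\<lambda>t. expected_coverage k X q i (\<theta>(j := t))) has_real_derivative coverage_slope i j \<theta>)
           (at s within {0..b})"
proof -
  let ?affine = "\<lambda>t. expected_coverage k X q i (\<theta>(j := 0)) + coverage_slope i j \<theta> * t"
  have affine: "(?affine has_real_derivative coverage_slope i j \<theta>) (at s within {0..b})"
    by (auto intro!: derivative_eq_intros)
  have agree: "?affine t = expected_coverage k X q i (\<theta>(j := t))" if "t \<in> {0..b}" for t
    using expected_coverage_affine[OF j, of t i \<theta>] that b by simp
  show ?thesis
    by (rule has_field_derivative_transform_within[OF affine zero_less_one s agree])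
qed

lemma expected_coverage_well_behaved:
  assumes vt: "\<And>l. l < k \<Longrightarrow> vt l \<le> 1"
  shows "well_behaved k (expected_coverage k X q) vt"
proof (rule well_behavedI)
  have cube: "0 \<le> \<theta> l \<and> \<theta> l \<le> 1" if "\<theta> \<in> box k vt" "l < k" for \<theta> l
    using that vt[of l] unfolding box_def by force
  show "0 \<le> (1::real) \<and> 0 < (1/2) ^ k * overlap X q i i / 2" if "i < k" for i
    using overlap_self_pos[OF that] by simp
  show "((\<lambda>t. expected_coverage k X q i (\<theta>(j := t))) has_real_derivative coverage_slope i j \<theta>)
          (at (\<theta> j) within {0..vt j})" if "i < k" "j < k" "\<theta> \<in> box k vt" for i j \<theta>
    using that cube[OF that(3,2)] vt[OF that(2)] unfolding box_def
    by (intro expected_coverage_has_derivative) auto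
  show "if j = i then (1/2) ^ k * overlap X q i i / 2 \<le> coverage_slope i j \<theta>
          else 0 \<le> coverage_slope i j \<theta> \<and> coverage_slope i j \<theta> \<le> 1"
    if "i < k" "j < k" "\<theta> \<in> box k vt" for i j \<theta>
    using coverage_slope_self_ge[OF cube[OF that(3)]] coverage_slope_bounds[OF that(1,2)] by simp
qed

lemma expected_coverage_own_strict_mono:
  assumes j: "j < k" and cube: "\<And>l. l < k \<Longrightarrow> 0 \<le> \<theta> l \<and> \<theta> l \<le> 1" and x: "0 \<le> x" "x < \<theta> j"
  shows "expected_coverage k X q j (\<theta>(j := x)) < expected_coverage k X q j \<theta>"
proof -
  have "0 < (1/2) ^ k * overlap X q j j / 2" using overlap_self_pos[OF j] by simp
  then have "0 < coverage_slope j j \<theta>" using coverage_slope_self_ge[of \<theta> j, OF cube] by linarith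
  then have "coverage_slope j j \<theta> * x < coverage_slope j j \<theta> * \<theta> j"
    using x by simp
  moreover have "\<theta> j \<le> 1" "\<theta>(j := \<theta> j) = \<theta>" using cube[OF j] by auto
  ultimately show ?thesis
    using expected_coverage_affine[OF j x(1), of j \<theta>] expected_coverage_affine[OF j, of "\<theta> j" j \<theta>] x
    by auto
qed

end

section \<open>Hub and leaves\<close>

definition leaves :: "nat \<Rightarrow> nat set" where
  "leaves m = {1..<m*m+1}"

lemma leaves_iff: "j \<in> leaves m \<longleftrightarrow> j < m*m+1 \<and> j \<noteq> 0"
  unfolding leaves_def by auto

lemma card_leaves: "card (leaves m) = m*m"
  unfolding leaves_def by simp

lemma cost_eq_hub_plus_leaves: "cost (m*m+1) \<theta> = \<theta> 0 + (\<Sum>l\<in>leaves m. \<theta> l)"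
  unfolding leaves_def by (simp add: cost_eq_first_plus_rest)

lemma sqrt_square_plus_one_le:
  assumes "1 \<le> m"
  shows "sqrt (real (m*m+1)) \<le> 2 * real m"
proof (rule real_le_lsqrt)
  have "1 * 1 \<le> real m * real m" using assms by (intro mult_mono) auto
  then show "real (m*m+1) \<le> (2 * real m)^2" by (simp add: power2_eq_square)
qed (use assms in auto)

lemma infinite_squares_plus_one:
  fixes P :: "nat \<Rightarrow> bool"
  assumes "\<And>m. 2 \<le> m \<Longrightarrow> P (m*m+1)"
  shows "infinite {k. P k}"
proof -
  have "strict_mono (\<lambda>n::nat. (n+2)*(n+2)+1)"
    by (intro strict_monoI add_strict_right_mono mult_strict_mono) auto
  then have "infinite (range (\<lambda>n::nat. (n+2)*(n+2)+1))"
    using range_inj_infinite strict_mono_imp_inj_on by blast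
  moreover have "P ((n+2)*(n+2)+1)" for n by (rule assms) simp
  then have "range (\<lambda>n::nat. (n+2)*(n+2)+1) \<subseteq> {k. P k}" by auto
  ultimately show ?thesis using infinite_super by blast
qed

section \<open>A coverage instance\<close>

lemma nat_div_eq_iff: "0 < m \<Longrightarrow> a div m = x \<longleftrightarrow> x * m \<le> a \<and> a < x * m + m"
  for a m x :: nat
proof
  assume m: "0 < m" and "a div m = x"
  have "a div m * m \<le> a" "a < a div m * m + m"
    using div_mult_mod_eq[of a m] mod_less_divisor[OF m, of a] by linarith+
  then show "x * m \<le> a \<and> a < x * m + m" using \<open>a div m = x\<close> by simp
next
  assume "x * m \<le> a \<and> a < x * m + m"
  then show "a div m = x" by (intro div_nat_eqI) (auto simp: mult.commute)
qed

lemma sum_if_mem: "finite A \<Longrightarrow> S \<subseteq> A \<Longrightarrow> (\<Sum>x\<in>A. if x \<in> S then f x else 0) = sum f S"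
  by (simp add: sum.inter_restrict[symmetric] Int_absorb1)

text \<open>Agent 0, the hub, samples uniformly from the points 0, ..., m-1. Leaf j shares the hub point
  (j-1) div m with the hub and with m-1 other leaves and owns the m-1 private points
  m j + 1, ..., m j + m - 1.\<close>

definition star_sets :: "nat \<Rightarrow> nat \<Rightarrow> nat set" where
  "star_sets m j = (if j = 0 then {..<m} else insert ((j-1) div m) {m*j+1 ..< m*j+m})"

definition star_domain :: "nat \<Rightarrow> nat set" where
  "star_domain m = {..< m*(m*m+1)}"

abbreviation star_q :: "nat \<Rightarrow> nat \<Rightarrow> nat \<Rightarrow> real" where
  "star_q m \<equiv> uniform_q (star_sets m)"

context
  fixes m :: nat
  assumes m: "2 \<le> m"
begin

lemma hub_point_less: "j \<in> leaves m \<Longrightarrow> (j-1) div m < m"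
  using m by (intro less_mult_imp_div_less) (auto simp: leaves_def)

lemma leaf_set_split:
  assumes l: "l \<in> leaves m"
  shows "star_sets m l = insert ((l-1) div m) {m*l+1 ..< m*l+m}"
    and "(l-1) div m \<notin> {m*l+1 ..< m*l+m}"
    and "\<And>x. x \<in> {m*l+1 ..< m*l+m} \<Longrightarrow> m \<le> x"
proof -
  have "m \<le> m*l" using l by (simp add: leaves_def)
  then show "\<And>x. x \<in> {m*l+1 ..< m*l+m} \<Longrightarrow> m \<le> x" by (simp, linarith)
  have "(l-1) div m < m*l+1" using \<open>m \<le> m*l\<close> hub_point_less[OF l] by linarith
  then show "(l-1) div m \<notin> {m*l+1 ..< m*l+m}" by simp
  show "star_sets m l = insert ((l-1) div m) {m*l+1 ..< m*l+m}"
    using l by (simp add: star_sets_def leaves_def)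
qed

lemma star_sets_props:
  assumes j: "j < m*m+1"
  shows "finite (star_sets m j)" "star_sets m j \<noteq> {}" "card (star_sets m j) = m"
    "star_sets m j \<subseteq> star_domain m"
proof -
  have "star_sets m j \<subseteq> star_domain m"
  proof (cases "j = 0")
    case True
    have "m \<le> m*(m*m+1)" by simp
    then show ?thesis using True by (auto simp: star_sets_def star_domain_def)
  next
    case False
    then have jl: "j \<in> leaves m" using j by (simp add: leaves_iff)
    have bound: "m*j+m \<le> m*(m*m+1)" using j mult_le_mono2[of "j+1" "m*m+1" m] by simp
    have "x < m*(m*m+1)" if x: "x \<in> star_sets m j" for x
    proof -
      have "x = (j-1) div m \<or> x < m*j+m" using x leaf_set_split(1)[OF jl] by auto
      moreover have "m \<le> m*(m*m+1)" by simp
      ultimately show ?thesis using bound hub_point_less[OF jl] by linarith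
    qed
    then show ?thesis unfolding star_domain_def by blast
  qed
  moreover have "card (star_sets m j) = m"
  proof (cases "j = 0")
    case False
    then have jl: "j \<in> leaves m" using j by (simp add: leaves_iff)
    show ?thesis using leaf_set_split(1,2)[OF jl] m by simp
  qed (simp add: star_sets_def)
  ultimately show "finite (star_sets m j)" "star_sets m j \<noteq> {}" "card (star_sets m j) = m"
    "star_sets m j \<subseteq> star_domain m"
    using m by (auto simp: star_domain_def intro: finite_subset)
qed

lemma star_q_eq: "j < m*m+1 \<Longrightarrow> star_q m j x = (if x \<in> star_sets m j then 1 / m else 0)"
  using star_sets_props[of j] unfolding uniform_q_def by (simp add: indicator_def)

lemma star_coverage_instance: "coverage_instance (m*m+1) (star_domain m) (star_q m)"
proof
  show "finite (star_domain m)" unfolding star_domain_def by simp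
  fix j x assume j: "j < m*m+1" and "x \<in> star_domain m"
  show "0 \<le> star_q m j x" using j by (simp add: star_q_eq)
  have "1 / real m \<le> 1/2" using m by (simp add: divide_simps)
  then show "star_q m j x \<le> 1/2" using j by (simp add: star_q_eq)
next
  fix j assume j: "j < m*m+1"
  have "(\<Sum>x\<in>star_domain m. star_q m j x) = (\<Sum>x\<in>star_sets m j. 1 / real m)"
    using star_sets_props[OF j] j by (simp add: star_q_eq sum_if_mem star_domain_def)
  also have "\<dots> = 1" using star_sets_props[OF j] m by simp
  finally show "(\<Sum>x\<in>star_domain m. star_q m j x) = 1" .
qed

lemma leaves_covering_hub_point:
  assumes x: "x < m"
  shows "{j \<in> leaves m. x \<in> star_sets m j} = {x*m+1..<x*m+m+1}"
proof (intro set_eqI iffI)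
  fix j assume "j \<in> {j \<in> leaves m. x \<in> star_sets m j}"
  then have j: "j \<in> leaves m" and xs: "x \<in> star_sets m j" by auto
  have "x \<notin> {m*j+1 ..< m*j+m}" using x leaf_set_split(3)[OF j] by force
  then have "(j-1) div m = x" using xs leaf_set_split(1)[OF j] by auto
  then have "x * m \<le> j - 1 \<and> j - 1 < x * m + m"
    by (rule iffD1[OF nat_div_eq_iff, rotated]) (use m in auto)
  then show "j \<in> {x*m+1..<x*m+m+1}" using j by (auto simp: leaves_def)
next
  fix j assume j: "j \<in> {x*m+1..<x*m+m+1}"
  have "(x+1)*m \<le> m*m" using x by (intro mult_le_mono1) simp
  then have "j \<in> leaves m" using j by (simp add: leaves_def algebra_simps)
  moreover have "(j-1) div m = x" using nat_div_eq_iff[of m "j-1" x] m j by auto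
  ultimately show "j \<in> {j \<in> leaves m. x \<in> star_sets m j}"
    using leaf_set_split(1) by auto
qed

lemma leaves_covering_private_point:
  assumes l: "l \<in> leaves m" and x: "x \<in> {m*l+1 ..< m*l+m}"
  shows "{j \<in> leaves m. x \<in> star_sets m j} = {l}"
proof -
  have "x div m = j" if j: "j \<in> leaves m" and xj: "x \<in> star_sets m j" for j
  proof -
    have "x \<noteq> (j-1) div m" using leaf_set_split(3)[OF l x] hub_point_less[OF j] by auto
    then have "m*j+1 \<le> x \<and> x < m*j+m" using xj leaf_set_split(1)[OF j] by auto
    then show ?thesis using nat_div_eq_iff[of m x j] m by (simp add: mult.commute)
  qed
  moreover have "x \<in> star_sets m l" using x leaf_set_split(1)[OF l] by auto
  ultimately show ?thesis using l by blast
qed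

lemma star_q_leaves_sum:
  "(\<Sum>j\<in>leaves m. star_q m j x) = card {j \<in> leaves m. x \<in> star_sets m j} / m"
proof -
  have "(\<Sum>j\<in>leaves m. star_q m j x) = (\<Sum>j\<in>leaves m. if x \<in> star_sets m j then 1 / real m else 0)"
    by (intro sum.cong refl) (simp add: star_q_eq leaves_iff)
  also have "\<dots> = (\<Sum>j\<in>{j \<in> leaves m. x \<in> star_sets m j}. 1 / real m)"
    by (rule sum.inter_filter[symmetric]) (simp add: leaves_def)
  finally show ?thesis by simp
qed

text \<open>A unit of hub effort adds total overlap 1 to the leaves, a unit of leaf effort only about
  2/m: this is where the ratio m/2 comes from.\<close>

lemma overlap_leaves_sum:
  assumes l: "l < m*m+1"
  shows "(\<Sum>j\<in>leaves m. overlap (star_domain m) (star_q m) j l) =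
    (if l = 0 then 1 else (2 * real m - 1) / (real m)^2)"
proof -
  have "(\<Sum>j\<in>leaves m. overlap (star_domain m) (star_q m) j l) =
      (\<Sum>x\<in>star_domain m. star_q m l x * (\<Sum>j\<in>leaves m. star_q m j x))"
    unfolding overlap_def by (subst sum.swap) (simp add: sum_distrib_left mult.commute)
  also have "\<dots> = (\<Sum>x\<in>star_domain m. if x \<in> star_sets m l
      then card {j \<in> leaves m. x \<in> star_sets m j} / (real m)^2 else 0)"
    using l by (intro sum.cong refl) (simp add: star_q_eq star_q_leaves_sum power2_eq_square)
  also have "\<dots> = (\<Sum>x\<in>star_sets m l. card {j \<in> leaves m. x \<in> star_sets m j} / (real m)^2)"
    using star_sets_props(4)[OF l] by (simp add: sum_if_mem star_domain_def)
  also have "\<dots> = (if l = 0 then 1 else (2 * real m - 1) / (real m)^2)"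
  proof (cases "l = 0")
    case True
    have "star_sets m 0 = {..<m}" by (simp add: star_sets_def)
    then have "(\<Sum>x\<in>star_sets m l. card {j \<in> leaves m. x \<in> star_sets m j} / (real m)^2) =
        (\<Sum>x<m. real m / (real m)^2)"
      using True by (intro sum.cong) (simp_all add: leaves_covering_hub_point)
    then show ?thesis using True m by (simp add: power2_eq_square)
  next
    case False
    then have l': "l \<in> leaves m" using l by (simp add: leaves_iff)
    have "(\<Sum>x\<in>star_sets m l. card {j \<in> leaves m. x \<in> star_sets m j} / (real m)^2) =
        m / (real m)^2 + (\<Sum>x\<in>{m*l+1 ..< m*l+m}. 1 / (real m)^2)"
      using leaf_set_split[OF l'] leaves_covering_private_point[OF l'] hub_point_less[OF l']
      by (simp add: leaves_covering_hub_point)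
    also have "\<dots> = (2 * real m - 1) / (real m)^2"
      using m by (simp add: of_nat_diff field_simps)
    finally show ?thesis using False by simp
  qed
  finally show ?thesis .
qed

lemma overlap_leaf_ge:
  assumes j: "j \<in> leaves m" and l: "l = 0 \<or> l = j"
  shows "1 / (real m)^2 \<le> overlap (star_domain m) (star_q m) j l"
proof -
  have jk: "j < m*m+1" and lk: "l < m*m+1" using j l by (auto simp: leaves_iff)
  define g where "g = (j-1) div m"
  have g: "g \<in> star_sets m j" "g \<in> star_sets m l"
    using leaf_set_split(1)[OF j] hub_point_less[OF j] l unfolding g_def star_sets_def by auto
  then have "g \<in> star_domain m" using star_sets_props(4)[OF jk] by auto
  then have "star_q m j g * star_q m l g \<le> overlap (star_domain m) (star_q m) j l"
    unfolding overlap_def using jk lk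
    by (intro member_le_sum) (auto simp: star_q_eq star_domain_def)
  then show ?thesis using g jk lk by (simp add: star_q_eq power2_eq_square)
qed

end

text \<open>A leaf needs utility 1/2 + star_gain m / 2, which is exactly what it attains when every leaf
  contributes 1/(2m): each of the m leaves sampling its hub point then misses that point with
  probability 1 - 1/(2m^2), and its m-1 private points are missed, by itself only, with the same
  probability. So that profile is a stable equilibrium; and star_gain m <= 1/m^2 keeps the hub's
  optimal contribution m^2 star_gain m in [0, 1], where utilities are affine.\<close>

definition star_gain :: "nat \<Rightarrow> real" where
  "star_gain m = 1 - ((1 - 1 / (2 * (real m)^2)) ^ m + (real m - 1) * (1 - 1 / (2 * (real m)^2))) / m"

definition star_mu :: "nat \<Rightarrow> nat \<Rightarrow> real" where
  "star_mu m = (\<lambda>i. if i = 0 then 1/2 else 1/2 + star_gain m / 2)"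

definition star_u :: "nat \<Rightarrow> nat \<Rightarrow> (nat \<Rightarrow> real) \<Rightarrow> real" where
  "star_u m = expected_coverage (m*m+1) (star_domain m) (star_q m)"

definition star_stable :: "nat \<Rightarrow> nat \<Rightarrow> real" where
  "star_stable m = (\<lambda>l. if l \<in> leaves m then 1 / (2 * real m) else 0)"

definition star_standalone :: "nat \<Rightarrow> nat \<Rightarrow> real" where
  "star_standalone m = (\<lambda>i. if i \<in> leaves m then star_gain m / overlap (star_domain m) (star_q m) i i else 0)"

context
  fixes m :: nat
  assumes m: "2 \<le> m"
begin

interpretation coverage_instance "m*m+1" "star_domain m" "star_q m"
  by (rule star_coverage_instance[OF m])

lemma star_gain_bounds: "0 < star_gain m" "star_gain m \<le> 1 / (real m)^2"
proof -
  define a where "a = 1 / (2 * (real m)^2)"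
  have "1 \<le> (real m)^2" using m by (intro one_le_power) simp
  then have "1 < 2 * (real m)^2" by linarith
  then have a: "0 < a" "a < 1" unfolding a_def using m by (auto simp: divide_simps)
  have m1: "1 \<le> real m" using m by simp
  have gain: "star_gain m = 1 - ((1 - a) ^ m + (real m - 1) * (1 - a)) / m"
    unfolding star_gain_def a_def ..
  have "(1 - a) ^ m < 1" using a m by (subst power_less_one_iff) auto
  moreover have "(real m - 1) * (1 - a) \<le> real m - 1" using a m1 by (simp add: mult_left_le)
  ultimately show "0 < star_gain m" unfolding gain using m1 by (simp add: field_simps)
  have "1 - real m * a \<le> (1 - a) ^ m"
    using Bernoulli_inequality[of "-a" m] a by simp
  then have "star_gain m \<le> 1 - ((1 - real m * a) + (real m - 1) * (1 - a)) / m"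
    unfolding gain using m1 by (simp add: divide_right_mono)
  also have "\<dots> = a + (real m - 1) / real m * a" using m1 by (simp add: field_simps)
  also have "\<dots> \<le> a + 1 * a" using a m1 by (intro add_left_mono mult_right_mono) auto
  finally show "star_gain m \<le> 1 / (real m)^2" unfolding a_def by simp
qed

lemma star_u_hub_free: "star_mu m 0 \<le> star_u m 0 \<theta>"
  using expected_coverage_ge_half[of 0 \<theta>] unfolding star_mu_def star_u_def by simp

lemma star_mu_le:
  "i < m*m+1 \<Longrightarrow> (i \<in> leaves m \<Longrightarrow> 1/2 + star_gain m / 2 \<le> star_u m i \<theta>) \<Longrightarrow> star_mu m i \<le> star_u m i \<theta>"
  using star_u_hub_free by (auto simp: star_mu_def leaves_iff)

lemma star_stable_cube: "0 \<le> star_stable m l \<and> star_stable m l \<le> 1"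
  using m unfolding star_stable_def by (simp add: divide_simps)

lemma miss_prod_star_stable:
  "(\<Prod>l<m*m+1. miss_prob (star_q m l x) (star_stable m l)) =
     (1 - 1 / (2 * (real m)^2)) ^ card {j \<in> leaves m. x \<in> star_sets m j}"
proof -
  have "(\<Prod>l<m*m+1. miss_prob (star_q m l x) (star_stable m l)) =
      (\<Prod>l<m*m+1. if l \<in> {j \<in> leaves m. x \<in> star_sets m j} then 1 - 1 / (2 * (real m)^2) else 1)"
  proof (intro prod.cong refl)
    fix l assume "l \<in> {..<m*m+1}"
    with star_stable_cube[of l] show "miss_prob (star_q m l x) (star_stable m l) =
        (if l \<in> {j \<in> leaves m. x \<in> star_sets m j} then 1 - 1 / (2 * (real m)^2) else 1)"
      by (auto simp: miss_prob_linear star_q_eq[OF m] star_stable_def power2_eq_square)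
  qed
  also have "\<dots> = (1 - 1 / (2 * (real m)^2)) ^ card ({..<m*m+1} \<inter> {j \<in> leaves m. x \<in> star_sets m j})"
    by (subst prod.If_cases) auto
  also have "{..<m*m+1} \<inter> {j \<in> leaves m. x \<in> star_sets m j} = {j \<in> leaves m. x \<in> star_sets m j}"
    by (auto simp: leaves_def)
  finally show ?thesis .
qed

lemma star_u_leaf_stable:
  assumes j: "j \<in> leaves m"
  shows "star_u m j (star_stable m) = 1/2 + star_gain m / 2"
proof -
  have jk: "j < m*m+1" using j by (simp add: leaves_iff)
  define c where "c = 1 - 1 / (2 * (real m)^2)"
  have "(\<Sum>x\<in>star_domain m. star_q m j x * (\<Prod>l<m*m+1. miss_prob (star_q m l x) (star_stable m l)))
      = (\<Sum>x\<in>star_domain m. if x \<in> star_sets m j then c ^ card {i \<in> leaves m. x \<in> star_sets m i} / m else 0)"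
    by (intro sum.cong refl) (unfold miss_prod_star_stable, simp add: star_q_eq[OF m jk] c_def)
  also have "\<dots> = (\<Sum>x\<in>star_sets m j. c ^ card {i \<in> leaves m. x \<in> star_sets m i} / m)"
    using star_sets_props(4)[OF m jk] by (simp add: sum_if_mem star_domain_def)
  also have "\<dots> = c ^ m / m + (\<Sum>x\<in>{m*j+1 ..< m*j+m}. c / m)"
    using leaf_set_split[OF m j] hub_point_less[OF m j]
    by (simp add: leaves_covering_hub_point[OF m] leaves_covering_private_point[OF m j])
  also have "\<dots> = (c ^ m + (real m - 1) * c) / m"
    using m by (simp add: of_nat_diff add_divide_distrib)
  finally have sum_eq: "(\<Sum>x\<in>star_domain m. star_q m j x * (\<Prod>l<m*m+1. miss_prob (star_q m l x) (star_stable m l)))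
      = (c ^ m + (real m - 1) * c) / m" .
  show ?thesis
    unfolding star_u_def expected_coverage_def sum_eq star_gain_def c_def[symmetric] using m by (simp add: field_simps)
qed

lemma star_feasible_bound:
  assumes f: "feasible (m*m+1) (nonneg_orthant (m*m+1)) (star_u m) (star_mu m) \<theta>"
  shows "real (m*m) * star_gain m \<le> \<theta> 0 + (2 * real m - 1) / (real m)^2 * (\<Sum>l\<in>leaves m. \<theta> l)"
proof -
  have nonneg: "\<And>l. l < m*m+1 \<Longrightarrow> 0 \<le> \<theta> l"
    using f nonneg_orthant_nonneg unfolding feasible_def by blast
  have leaf: "star_gain m \<le> (\<Sum>l<m*m+1. \<theta> l * overlap (star_domain m) (star_q m) j l)"
    if j: "j \<in> leaves m" for j
  proof -
    have jk: "j < m*m+1" using j by (simp add: leaves_iff)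
    have "1/2 + star_gain m / 2 \<le> star_u m j \<theta>"
      using f j unfolding feasible_def star_mu_def by (auto simp: leaves_iff)
    moreover have "star_u m j \<theta> \<le> 1/2 + 1/2 * (\<Sum>l<m*m+1. \<theta> l * overlap (star_domain m) (star_q m) j l)"
      unfolding star_u_def by (rule expected_coverage_le_linear[OF jk nonneg])
    ultimately show ?thesis by linarith
  qed
  have leaf_terms: "(\<Sum>l\<in>leaves m. \<theta> l * (if l = 0 then 1 else c)) = c * (\<Sum>l\<in>leaves m. \<theta> l)"
    for c :: real
    by (auto simp: sum_distrib_left leaves_iff intro: sum.cong)
  have "real (m*m) * star_gain m = (\<Sum>j\<in>leaves m. star_gain m)" by (simp add: card_leaves)
  also have "\<dots> \<le> (\<Sum>j\<in>leaves m. \<Sum>l<m*m+1. \<theta> l * overlap (star_domain m) (star_q m) j l)"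
    by (intro sum_mono leaf)
  also have "\<dots> = (\<Sum>l<m*m+1. \<theta> l * (\<Sum>j\<in>leaves m. overlap (star_domain m) (star_q m) j l))"
    by (subst sum.swap) (simp add: sum_distrib_left)
  also have "\<dots> = (\<Sum>l<m*m+1. \<theta> l * (if l = 0 then 1 else (2 * real m - 1) / (real m)^2))"
    by (intro sum.cong refl) (simp add: overlap_leaves_sum[OF m])
  also have "\<dots> = \<theta> 0 + (2 * real m - 1) / (real m)^2 * (\<Sum>l\<in>leaves m. \<theta> l)"
    unfolding cost_def[symmetric] cost_eq_hub_plus_leaves leaf_terms by simp
  finally show ?thesis .
qed

lemma star_cost_lower:
  assumes f: "feasible (m*m+1) (nonneg_orthant (m*m+1)) (star_u m) (star_mu m) \<theta>"
    and hub: "\<forall>j<m*m+1. \<theta> 0 \<le> \<theta> j"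
  shows "real m ^ 3 * star_gain m / 2 \<le> cost (m*m+1) \<theta>"
proof -
  define T where "T = (\<Sum>l\<in>leaves m. \<theta> l)"
  have m1: "1 \<le> real m" using m by simp
  have "real (m*m) * \<theta> 0 = (\<Sum>l\<in>leaves m. \<theta> 0)" by (simp add: card_leaves)
  also have "\<dots> \<le> T" unfolding T_def using hub by (intro sum_mono) (simp add: leaves_iff)
  finally have "\<theta> 0 \<le> T / (real m)^2" using m1 by (simp add: field_simps power2_eq_square)
  then have "real (m*m) * star_gain m \<le> T / (real m)^2 + (2 * real m - 1) / (real m)^2 * T"
    using star_feasible_bound[OF f] unfolding T_def by linarith
  also have "\<dots> = 2 / real m * T" using m1 by (simp add: field_simps power2_eq_square)
  finally have "real m ^ 3 * star_gain m \<le> 2 * T" using m1 by (simp add: field_simps power3_eq_cube)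
  moreover have "0 \<le> \<theta> 0"
    using f nonneg_orthant_nonneg[of \<theta> "m*m+1" 0] unfolding feasible_def by simp
  ultimately show ?thesis unfolding cost_eq_hub_plus_leaves T_def by linarith
qed

lemma star_socially_optimal:
  "socially_optimal (m*m+1) (nonneg_orthant (m*m+1)) (star_u m) (star_mu m) (alone 0 (real (m*m) * star_gain m))"
  (is "socially_optimal _ _ _ _ ?opt")
proof -
  define a where "a = real (m*m) * star_gain m"
  have m1: "1 \<le> real m" using m by simp
  have "a \<le> real (m*m) * (1 / (real m)^2)"
    unfolding a_def using star_gain_bounds by (intro mult_left_mono) auto
  then have a: "0 \<le> a" "a \<le> 1"
    using star_gain_bounds(1) m1 by (auto simp: a_def power2_eq_square)
  have cost_opt: "cost (m*m+1) ?opt = a"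
    unfolding cost_eq_hub_plus_leaves a_def by (simp add: alone_def leaves_iff)
  have "star_mu m i \<le> star_u m i ?opt" if i: "i < m*m+1" for i
  proof (rule star_mu_le[OF i])
    assume j: "i \<in> leaves m"
    have "a * (1 / (real m)^2) \<le> a * overlap (star_domain m) (star_q m) i 0"
      using overlap_leaf_ge[OF m j] a by (intro mult_left_mono) auto
    moreover have "a * (1 / (real m)^2) = star_gain m" using m1 by (simp add: a_def power2_eq_square)
    ultimately show "1/2 + star_gain m / 2 \<le> star_u m i ?opt"
      using expected_coverage_alone[OF i _ a, of 0] unfolding star_u_def a_def by (simp add: mult_ac)
  qed
  then have feasible: "feasible (m*m+1) (nonneg_orthant (m*m+1)) (star_u m) (star_mu m) ?opt"
    unfolding feasible_def a_def[symmetric] using a by (simp add: alone_in_nonneg_orthant)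
  have "cost (m*m+1) ?opt \<le> cost (m*m+1) \<theta>"
    if f: "feasible (m*m+1) (nonneg_orthant (m*m+1)) (star_u m) (star_mu m) \<theta>" for \<theta>
  proof -
    have T: "0 \<le> (\<Sum>l\<in>leaves m. \<theta> l)"
      using f nonneg_orthant_nonneg unfolding feasible_def by (auto simp: leaves_iff intro: sum_nonneg)
    have "0 \<le> (real m - 1) * (real m - 1)" by simp
    then have "2 * real m - 1 \<le> real m * real m" by (simp add: algebra_simps)
    then have "(2 * real m - 1) / (real m)^2 \<le> 1"
      using m1 by (simp add: pos_divide_le_eq power2_eq_square)
    moreover have "0 \<le> (2 * real m - 1) / (real m)^2" using m1 by simp
    ultimately have "(2 * real m - 1) / (real m)^2 * (\<Sum>l\<in>leaves m. \<theta> l) \<le> (\<Sum>l\<in>leaves m. \<theta> l)"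
      using T by (intro mult_left_le_one_le)
    then show ?thesis
      using star_feasible_bound[OF f] cost_opt cost_eq_hub_plus_leaves[of m \<theta>] unfolding a_def by linarith
  qed
  with feasible show ?thesis unfolding socially_optimal_def by blast
qed

lemma cost_star_optimum: "cost (m*m+1) (alone 0 (real (m*m) * star_gain m)) = real (m*m) * star_gain m"
  unfolding cost_eq_hub_plus_leaves by (simp add: alone_def leaves_iff)

lemma star_stable_feasible:
  "feasible (m*m+1) (nonneg_orthant (m*m+1)) (star_u m) (star_mu m) (star_stable m)"
  unfolding feasible_def
proof (intro conjI allI impI)
  show "star_stable m \<in> nonneg_orthant (m*m+1)"
    using star_stable_cube unfolding nonneg_orthant_def star_stable_def by (auto simp: leaves_iff)
  show "star_mu m i \<le> star_u m i (star_stable m)" if "i < m*m+1" for i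
    using that by (rule star_mu_le) (simp add: star_u_leaf_stable)
qed

lemma star_stable_eq:
  "stable_eq (m*m+1) (nonneg_orthant (m*m+1)) (star_u m) (star_mu m) (star_stable m)"
  unfolding stable_eq_def
proof (intro conjI notI star_stable_feasible)
  assume "\<exists>i<m*m+1. \<exists>x. x < star_stable m i \<and> (star_stable m)(i := x) \<in> nonneg_orthant (m*m+1) \<and>
    star_mu m i \<le> star_u m i ((star_stable m)(i := x))"
  then obtain i x where i: "i < m*m+1" and x: "x < star_stable m i"
    and orth: "(star_stable m)(i := x) \<in> nonneg_orthant (m*m+1)"
    and le: "star_mu m i \<le> star_u m i ((star_stable m)(i := x))" by blast
  have "0 \<le> x" using nonneg_orthant_nonneg[OF orth i] by simp
  then have j: "i \<in> leaves m" using x by (auto simp: star_stable_def split: if_splits)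
  have "star_u m i ((star_stable m)(i := x)) < star_u m i (star_stable m)"
    unfolding star_u_def using i star_stable_cube \<open>0 \<le> x\<close> x
    by (intro expected_coverage_own_strict_mono) auto
  then show False using le star_u_leaf_stable[OF j] j by (simp add: star_mu_def leaves_iff)
qed

lemma star_unit_envy_free:
  "envy_free (m*m+1) (nonneg_orthant (m*m+1)) (star_u m) (star_mu m) (unit_profile (m*m+1))"
  unfolding envy_free_def
proof (intro conjI unit_profile_no_envy)
  have "star_u m i (star_stable m) \<le> star_u m i (unit_profile (m*m+1))" if "i < m*m+1" for i
    unfolding star_u_def using that star_stable_cube
    by (intro expected_coverage_mono) (auto simp: unit_profile_def)
  then show "feasible (m*m+1) (nonneg_orthant (m*m+1)) (star_u m) (star_mu m) (unit_profile (m*m+1))"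
    using star_stable_feasible unit_profile_in_nonneg_orthant
    unfolding feasible_def by (meson order.trans)
qed

lemma star_standalone_bounds:
  assumes i: "i \<in> leaves m"
  shows "0 \<le> star_standalone m i" "star_standalone m i \<le> 1"
    "star_standalone m i * overlap (star_domain m) (star_q m) i i = star_gain m"
proof -
  have ov: "1 / (real m)^2 \<le> overlap (star_domain m) (star_q m) i i"
    using overlap_leaf_ge[OF m i] by simp
  moreover have "0 < 1 / (real m)^2" using m by simp
  ultimately have pos: "0 < overlap (star_domain m) (star_q m) i i" by linarith
  have "star_gain m / overlap (star_domain m) (star_q m) i i \<le> star_gain m / (1 / (real m)^2)"
    using star_gain_bounds(1) ov \<open>0 < 1 / (real m)^2\<close> pos
    by (intro divide_left_mono) auto
  also have "\<dots> \<le> 1" using star_gain_bounds(2) m by (simp add: field_simps)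
  finally show "0 \<le> star_standalone m i" "star_standalone m i \<le> 1"
    "star_standalone m i * overlap (star_domain m) (star_q m) i i = star_gain m"
    using i pos star_gain_bounds(1) unfolding star_standalone_def by auto
qed

lemma star_standalone_cube: "i < m*m+1 \<Longrightarrow> 0 \<le> star_standalone m i \<and> star_standalone m i \<le> 1"
  using star_standalone_bounds by (auto simp: star_standalone_def leaves_iff)

lemma star_collab_problem:
  "collab_problem (m*m+1) (nonneg_orthant (m*m+1)) (star_u m) (star_mu m) (star_standalone m)"
  unfolding collab_problem_def
proof (intro conjI allI impI ballI subset_refl)
  fix i \<theta> \<theta>' assume i: "i < m*m+1" and "\<theta> \<in> nonneg_orthant (m*m+1)" "\<forall>j<m*m+1. \<theta> j \<le> \<theta>' j"
  then show "star_u m i \<theta> \<le> star_u m i \<theta>'"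
    unfolding star_u_def by (intro expected_coverage_mono) (auto simp: nonneg_orthant_nonneg)
next
  fix i assume i: "i < m*m+1"
  show "0 \<le> star_standalone m i" using star_standalone_cube[OF i] by simp
  then show "alone i (star_standalone m i) \<in> nonneg_orthant (m*m+1)"
    using i by (rule alone_in_nonneg_orthant[rotated])
  show "star_mu m i \<le> star_u m i (alone i (star_standalone m i))"
  proof (rule star_mu_le[OF i])
    assume j: "i \<in> leaves m"
    show "1/2 + star_gain m / 2 \<le> star_u m i (alone i (star_standalone m i))"
      using expected_coverage_alone[OF i i star_standalone_bounds(1,2)[OF j]] star_standalone_bounds(3)[OF j]
      unfolding star_u_def by (simp add: mult_ac)
  qed
qed

lemma star_well_behaved: "well_behaved (m*m+1) (star_u m) (star_standalone m)"
  unfolding star_u_def using star_standalone_cube by (intro expected_coverage_well_behaved) auto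

lemma coverage_example:
  "\<exists>X S \<mu> vt. finite X \<and> (\<exists>s. \<forall>i<m*m+1. S i \<subseteq> X \<and> S i \<noteq> {} \<and> card (S i) = s) \<and>
     collab_problem (m*m+1) (nonneg_orthant (m*m+1)) (coverage_u (m*m+1) X (uniform_q S)) \<mu> vt \<and>
     well_behaved (m*m+1) (coverage_u (m*m+1) X (uniform_q S)) vt \<and>
     bad_prices (m*m+1) (nonneg_orthant (m*m+1)) (coverage_u (m*m+1) X (uniform_q S)) \<mu>
       (1/4 * sqrt (real (m*m+1)))"
proof (intro exI conjI)
  have u: "coverage_u (m*m+1) (star_domain m) (star_q m) = star_u m"
    unfolding star_u_def by (rule coverage_u_eq_expected_coverage) (auto simp: star_domain_def q_le_one)
  show "finite (star_domain m)" by (simp add: star_domain_def)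
  show "\<forall>i<m*m+1. star_sets m i \<subseteq> star_domain m \<and> star_sets m i \<noteq> {} \<and> card (star_sets m i) = m"
    using star_sets_props[OF m] by blast
  show "collab_problem (m*m+1) (nonneg_orthant (m*m+1)) (coverage_u (m*m+1) (star_domain m) (star_q m))
      (star_mu m) (star_standalone m)"
    unfolding u by (rule star_collab_problem)
  show "well_behaved (m*m+1) (coverage_u (m*m+1) (star_domain m) (star_q m)) (star_standalone m)"
    unfolding u by (rule star_well_behaved)
  have m0: "0 < real m" using m by simp
  have "1/4 * sqrt (real (m*m+1)) \<le> real m / 2" using sqrt_square_plus_one_le[of m] m by simp
  also have "\<dots> = (real m ^ 3 * star_gain m / 2) / cost (m*m+1) (alone 0 (real (m*m) * star_gain m))"
    unfolding cost_star_optimum using m0 star_gain_bounds(1) by (simp add: power3_eq_cube field_simps)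
  finally have ratio: "1/4 * sqrt (real (m*m+1)) \<le>
      (real m ^ 3 * star_gain m / 2) / cost (m*m+1) (alone 0 (real (m*m) * star_gain m))" .
  show "bad_prices (m*m+1) (nonneg_orthant (m*m+1)) (coverage_u (m*m+1) (star_domain m) (star_q m))
      (star_mu m) (1/4 * sqrt (real (m*m+1)))"
    unfolding u
    by (rule bad_prices_free_rider[OF _ star_u_hub_free star_socially_optimal _ star_stable_eq
          star_unit_envy_free star_cost_lower ratio])
      (use m0 star_gain_bounds(1) cost_star_optimum in auto)
qed

end

section \<open>A linear instance\<close>

definition hub_weights :: "nat \<Rightarrow> nat \<Rightarrow> nat \<Rightarrow> real" where
  "hub_weights m = (\<lambda>i j. if i = j then 1 else if j = 0 then 1 / real m else 0)"

definition leaf_indicator :: "nat \<Rightarrow> nat \<Rightarrow> real" where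
  "leaf_indicator m = (\<lambda>l. if l \<in> leaves m then 1 else 0)"

context
  fixes m :: nat
  assumes m: "2 \<le> m"
begin

lemma hub_weights_bounds:
  "\<forall>i<m*m+1. \<forall>j<m*m+1. 0 \<le> hub_weights m i j \<and> hub_weights m i j \<le> 1"
  "\<forall>i<m*m+1. hub_weights m i i = 1"
  "\<forall>i<m*m+1. \<forall>j<m*m+1. j \<noteq> i \<longrightarrow> hub_weights m i j \<le> 2 / sqrt (real (m*m+1))"
proof -
  have m1: "1 \<le> real m" using m by simp
  show "\<forall>i<m*m+1. \<forall>j<m*m+1. 0 \<le> hub_weights m i j \<and> hub_weights m i j \<le> 1"
    "\<forall>i<m*m+1. hub_weights m i i = 1"
    using m1 by (simp_all add: hub_weights_def)
  have "(0::real) < real (m*m+1)" by (rule of_nat_0_less_iff[THEN iffD2]) simp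
  then have "0 < sqrt (real (m*m+1))" by simp
  then have "1 / real m \<le> 2 / sqrt (real (m*m+1))"
    using sqrt_square_plus_one_le[of m] m1 by (simp add: divide_simps)
  then show "\<forall>i<m*m+1. \<forall>j<m*m+1. j \<noteq> i \<longrightarrow> hub_weights m i j \<le> 2 / sqrt (real (m*m+1))"
    by (simp add: hub_weights_def)
qed

lemma linear_u_hub_weights:
  assumes i: "i < m*m+1"
  shows "linear_u (m*m+1) (hub_weights m) i \<theta> = (if i = 0 then \<theta> 0 else \<theta> i + \<theta> 0 / real m)"
proof -
  have "linear_u (m*m+1) (hub_weights m) i \<theta> =
      hub_weights m i 0 * \<theta> 0 + (\<Sum>l\<in>leaves m. if l = i then \<theta> i else 0)"
    unfolding linear_u_def cost_def[symmetric] cost_eq_hub_plus_leaves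
    by (auto simp: hub_weights_def leaves_iff intro: sum.cong)
  also have "\<dots> = hub_weights m i 0 * \<theta> 0 + (if i \<in> leaves m then \<theta> i else 0)"
    by (subst sum.delta) (simp_all add: leaves_def)
  finally show ?thesis using i by (simp add: hub_weights_def leaves_iff)
qed

lemma hub_feasible_leaf:
  assumes f: "feasible (m*m+1) \<Theta> (linear_u (m*m+1) (hub_weights m)) (leaf_indicator m) \<theta>"
    and j: "j \<in> leaves m"
  shows "1 \<le> \<theta> j + \<theta> 0 / real m"
proof -
  have jk: "j < m*m+1" and "j \<noteq> 0" using j by (auto simp: leaves_iff)
  have "leaf_indicator m j \<le> linear_u (m*m+1) (hub_weights m) j \<theta>"
    using f jk unfolding feasible_def by blast
  then show ?thesis
    unfolding linear_u_hub_weights[OF jk] using j \<open>j \<noteq> 0\<close> by (simp add: leaf_indicator_def)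
qed

lemma hub_free:
  "\<theta> \<in> nonneg_orthant (m*m+1) \<Longrightarrow> leaf_indicator m 0 \<le> linear_u (m*m+1) (hub_weights m) 0 \<theta>"
  using nonneg_orthant_nonneg[of \<theta> "m*m+1" 0] linear_u_hub_weights[of 0 \<theta>]
  by (simp add: leaf_indicator_def leaves_iff)

lemma hub_cost_lower:
  assumes f: "feasible (m*m+1) (nonneg_orthant (m*m+1)) (linear_u (m*m+1) (hub_weights m)) (leaf_indicator m) \<theta>"
    and hub: "\<forall>j<m*m+1. \<theta> 0 \<le> \<theta> j"
  shows "real (m*m) / 2 \<le> cost (m*m+1) \<theta>"
proof -
  have nonneg: "\<And>l. l < m*m+1 \<Longrightarrow> 0 \<le> \<theta> l"
    using f nonneg_orthant_nonneg unfolding feasible_def by blast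
  have m1: "1 \<le> real m" using m by simp
  have "1/2 \<le> \<theta> l" if l: "l \<in> leaves m" for l
  proof -
    have lk: "l < m*m+1" using l by (simp add: leaves_iff)
    have "\<theta> 0 / real m \<le> \<theta> l / real m" using hub lk m1 by (simp add: divide_right_mono)
    also have "\<dots> \<le> \<theta> l / 1" using nonneg[OF lk] m1 by (intro divide_left_mono) auto
    finally show ?thesis using hub_feasible_leaf[OF f l] by simp
  qed
  then have "(\<Sum>l\<in>leaves m. 1/2) \<le> (\<Sum>l\<in>leaves m. \<theta> l)" by (intro sum_mono)
  then have "real (m*m) / 2 \<le> (\<Sum>l\<in>leaves m. \<theta> l)" by (simp add: card_leaves)
  then show ?thesis using nonneg[of 0] unfolding cost_eq_hub_plus_leaves by simp
qed

lemma hub_socially_optimal: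
  "socially_optimal (m*m+1) (nonneg_orthant (m*m+1)) (linear_u (m*m+1) (hub_weights m)) (leaf_indicator m)
     (alone 0 (real m))"
  and cost_hub_optimum: "cost (m*m+1) (alone 0 (real m)) = real m"
proof -
  have m1: "1 \<le> real m" using m by simp
  show cost_opt: "cost (m*m+1) (alone 0 (real m)) = real m"
    unfolding cost_eq_hub_plus_leaves by (simp add: alone_def leaves_iff)
  have feasible: "feasible (m*m+1) (nonneg_orthant (m*m+1)) (linear_u (m*m+1) (hub_weights m))
      (leaf_indicator m) (alone 0 (real m))"
    unfolding feasible_def
  proof (intro conjI allI impI)
    show "alone 0 (real m) \<in> nonneg_orthant (m*m+1)" by (simp add: alone_in_nonneg_orthant)
    show "leaf_indicator m i \<le> linear_u (m*m+1) (hub_weights m) i (alone 0 (real m))"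
      if i: "i < m*m+1" for i
      unfolding linear_u_hub_weights[OF i] using m1 by (simp add: leaf_indicator_def alone_def)
  qed
  have "real m \<le> cost (m*m+1) \<theta>"
    if f: "feasible (m*m+1) (nonneg_orthant (m*m+1)) (linear_u (m*m+1) (hub_weights m)) (leaf_indicator m) \<theta>"
    for \<theta>
  proof (cases "real m \<le> \<theta> 0")
    case True
    then show ?thesis
      using f nonneg_orthant_nonneg unfolding feasible_def cost_eq_hub_plus_leaves
      by (smt (verit) leaves_iff sum_nonneg)
  next
    case False
    have "(\<Sum>l\<in>leaves m. 1 - \<theta> 0 / real m) \<le> (\<Sum>l\<in>leaves m. \<theta> l)"
      using hub_feasible_leaf[OF f] by (intro sum_mono) force
    moreover have "(\<Sum>l\<in>leaves m. 1 - \<theta> 0 / real m) = real m * real m - real m * \<theta> 0"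
      using m1 by (simp add: card_leaves field_simps)
    ultimately have "real m * real m - real m * \<theta> 0 \<le> (\<Sum>l\<in>leaves m. \<theta> l)" by simp
    moreover have "(real m - 1) * \<theta> 0 \<le> (real m - 1) * real m"
      using False m1 by (intro mult_left_mono) auto
    ultimately show ?thesis unfolding cost_eq_hub_plus_leaves by (simp add: algebra_simps)
  qed
  with feasible show "socially_optimal (m*m+1) (nonneg_orthant (m*m+1)) (linear_u (m*m+1) (hub_weights m))
      (leaf_indicator m) (alone 0 (real m))"
    unfolding socially_optimal_def cost_opt by blast
qed

lemma leaf_indicator_feasible:
  "feasible (m*m+1) (nonneg_orthant (m*m+1)) (linear_u (m*m+1) (hub_weights m)) (leaf_indicator m)
     (leaf_indicator m)"
  unfolding feasible_def
proof (intro conjI allI impI)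
  show "leaf_indicator m \<in> nonneg_orthant (m*m+1)"
    by (auto simp: nonneg_orthant_def leaf_indicator_def leaves_iff)
  show "leaf_indicator m i \<le> linear_u (m*m+1) (hub_weights m) i (leaf_indicator m)"
    if i: "i < m*m+1" for i
    unfolding linear_u_hub_weights[OF i] by (simp add: leaf_indicator_def leaves_iff)
qed

lemma hub_stable_eq:
  "stable_eq (m*m+1) (nonneg_orthant (m*m+1)) (linear_u (m*m+1) (hub_weights m)) (leaf_indicator m)
     (leaf_indicator m)"
  unfolding stable_eq_def
proof (intro conjI notI leaf_indicator_feasible)
  assume "\<exists>i<m*m+1. \<exists>x. x < leaf_indicator m i \<and> (leaf_indicator m)(i := x) \<in> nonneg_orthant (m*m+1) \<and>
    leaf_indicator m i \<le> linear_u (m*m+1) (hub_weights m) i ((leaf_indicator m)(i := x))"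
  then obtain i x where i: "i < m*m+1" and x: "x < leaf_indicator m i"
    and orth: "(leaf_indicator m)(i := x) \<in> nonneg_orthant (m*m+1)"
    and le: "leaf_indicator m i \<le> linear_u (m*m+1) (hub_weights m) i ((leaf_indicator m)(i := x))"
    by blast
  have "0 \<le> x" using nonneg_orthant_nonneg[OF orth i] by simp
  then have "i \<in> leaves m" using x by (auto simp: leaf_indicator_def split: if_splits)
  then show False
    using x le unfolding linear_u_hub_weights[OF i] by (simp add: leaf_indicator_def leaves_iff)
qed

lemma hub_unit_envy_free:
  "envy_free (m*m+1) (nonneg_orthant (m*m+1)) (linear_u (m*m+1) (hub_weights m)) (leaf_indicator m)
     (unit_profile (m*m+1))"
  unfolding envy_free_def feasible_def
proof (intro conjI allI impI unit_profile_no_envy unit_profile_in_nonneg_orthant)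
  show "leaf_indicator m i \<le> linear_u (m*m+1) (hub_weights m) i (unit_profile (m*m+1))"
    if i: "i < m*m+1" for i
    unfolding linear_u_hub_weights[OF i] using i by (simp add: leaf_indicator_def unit_profile_def)
qed

lemma hub_collab_problem:
  "collab_problem (m*m+1) (nonneg_orthant (m*m+1)) (linear_u (m*m+1) (hub_weights m)) (leaf_indicator m)
     (leaf_indicator m)"
  unfolding collab_problem_def
proof (intro conjI allI impI ballI subset_refl)
  fix i \<theta> \<theta>' assume "i < m*m+1" "\<theta> \<in> nonneg_orthant (m*m+1)" "\<theta>' \<in> nonneg_orthant (m*m+1)"
    "\<forall>j<m*m+1. \<theta> j \<le> \<theta>' j"
  then show "linear_u (m*m+1) (hub_weights m) i \<theta> \<le> linear_u (m*m+1) (hub_weights m) i \<theta>'"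
    unfolding linear_u_def by (intro sum_mono mult_left_mono) (auto simp: hub_weights_def)
next
  fix i assume i: "i < m*m+1"
  show "0 \<le> leaf_indicator m i" by (simp add: leaf_indicator_def)
  then show "alone i (leaf_indicator m i) \<in> nonneg_orthant (m*m+1)"
    using i by (rule alone_in_nonneg_orthant[rotated])
  show "leaf_indicator m i \<le> linear_u (m*m+1) (hub_weights m) i (alone i (leaf_indicator m i))"
    unfolding linear_u_hub_weights[OF i] by (simp add: leaf_indicator_def alone_def)
qed

lemma linear_example:
  "\<exists>W \<mu> vt. (\<forall>i<m*m+1. \<forall>j<m*m+1. 0 \<le> W i j \<and> W i j \<le> 1) \<and> (\<forall>i<m*m+1. W i i = 1) \<and>
     (\<forall>i<m*m+1. \<forall>j<m*m+1. j \<noteq> i \<longrightarrow> W i j \<le> 2 / sqrt (real (m*m+1))) \<and>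
     collab_problem (m*m+1) (nonneg_orthant (m*m+1)) (linear_u (m*m+1) W) \<mu> vt \<and>
     well_behaved (m*m+1) (linear_u (m*m+1) W) vt \<and>
     bad_prices (m*m+1) (nonneg_orthant (m*m+1)) (linear_u (m*m+1) W) \<mu> (1/4 * sqrt (real (m*m+1)))"
proof (intro exI[of _ "hub_weights m"] exI[of _ "leaf_indicator m"] conjI hub_weights_bounds
    hub_collab_problem linear_well_behaved)
  have m0: "0 < real m" using m by simp
  have "1/4 * sqrt (real (m*m+1)) \<le> real m / 2" using sqrt_square_plus_one_le[of m] m by simp
  also have "\<dots> = (real (m*m) / 2) / cost (m*m+1) (alone 0 (real m))"
    unfolding cost_hub_optimum using m0 by (simp add: field_simps)
  finally have ratio: "1/4 * sqrt (real (m*m+1)) \<le> (real (m*m) / 2) / cost (m*m+1) (alone 0 (real m))" .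
  show "bad_prices (m*m+1) (nonneg_orthant (m*m+1)) (linear_u (m*m+1) (hub_weights m)) (leaf_indicator m)
      (1/4 * sqrt (real (m*m+1)))"
    by (rule bad_prices_free_rider[OF _ hub_free hub_socially_optimal _ hub_stable_eq hub_unit_envy_free
          hub_cost_lower ratio])
      (use m0 cost_hub_optimum in auto)
qed

end

theorem theorem4:
  "\<exists>c::real. 0 < c \<and>
     infinite {k::nat. \<exists>X S \<mu> vt. finite X \<and>
        (\<exists>s. \<forall>i<k. S i \<subseteq> X \<and> S i \<noteq> {} \<and> card (S i) = s) \<and>
        collab_problem k (nonneg_orthant k) (coverage_u k X (uniform_q S)) \<mu> vt \<and>
        well_behaved k (coverage_u k X (uniform_q S)) vt \<and>
        bad_prices k (nonneg_orthant k) (coverage_u k X (uniform_q S)) \<mu> (c * sqrt (real k))} \<and>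
     (\<exists>C::real. infinite {k::nat. \<exists>W \<mu> vt.
        (\<forall>i<k. \<forall>j<k. 0 \<le> W i j \<and> W i j \<le> 1) \<and> (\<forall>i<k. W i i = 1) \<and>
        (\<forall>i<k. \<forall>j<k. j \<noteq> i \<longrightarrow> W i j \<le> C / sqrt (real k)) \<and>
        collab_problem k (nonneg_orthant k) (linear_u k W) \<mu> vt \<and>
        well_behaved k (linear_u k W) vt \<and>
        bad_prices k (nonneg_orthant k) (linear_u k W) \<mu> (c * sqrt (real k))})"
proof (rule exI[of _ "1/4"], intro conjI exI[of _ 2])
  show "0 < (1/4 :: real)" by simp
qed (rule infinite_squares_plus_one, erule coverage_example linear_example)+

end
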